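(* The tenth order mock theta function $\psi_{10}(q)=\sum_{n\ge0}\frac{q^{\binom{n+1}2}}{(q;q^2)_n}$ is the generating function $\sum_\pi q^{|\pi|}$ over partitions $\pi$ with $n$ copies of $n$ (including the empty one) in which, with parts in ascending lexicographic order, the weighted difference between each part and the preceding one is exactly $-1$, and the smallest part is of the form $j_j$.
   Context: $M=\{m_i: 1\le i\le m\}$; a partition with $n$ copies of $n$ is a finite multiset of elements of $M$, $|\pi|$ the sum of values. Lexicographic order: $m_i>n_j$ iff $m>n$, or $m=n$ and $i>j$. Weighted difference $((m_i-n_j))=m-n-i-j$. $(a;q)_n=\prod_{j=0}^{n-1}(1-aq^j)$. *)

theory Defs
  imports "HOL-Analysis.Analysis" "HOL-Library.Multiset"
begin

definition qpoch :: "complex \<Rightarrow> complex \<Rightarrow> nat \<Rightarrow> complex" where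
  "qpoch a q n = (\<Prod>j<n. 1 - a * q ^ j)"

definition psi10_term :: "complex \<Rightarrow> nat \<Rightarrow> complex" where
  "psi10_term q n = q ^ ((n + 1) choose 2) / qpoch q (q ^ 2) n"

definition psi10 :: "complex \<Rightarrow> complex" where
  "psi10 q = (\<Sum>n. psi10_term q n)"

text \<open>A part m_i is encoded as the pair (m, i) with 1 \<le> i \<le> m.
\<close>
definition valid_part :: "nat \<times> nat \<Rightarrow> bool" where
  "valid_part p \<longleftrightarrow> 1 \<le> snd p \<and> snd p \<le> fst p"

definition lex_le :: "nat \<times> nat \<Rightarrow> nat \<times> nat \<Rightarrow> bool" where
  "lex_le r p \<longleftrightarrow> fst r < fst p \<or> (fst r = fst p \<and> snd r \<le> snd p)"

definition wdiff :: "nat \<times> nat \<Rightarrow> nat \<times> nat \<Rightarrow> int" where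
  "wdiff p r = int (fst p) - int (fst r) - int (snd p) - int (snd r)"

definition ncopy_partition :: "(nat \<times> nat) multiset \<Rightarrow> bool" where
  "ncopy_partition P \<longleftrightarrow> (\<forall>p \<in># P. valid_part p)"

definition psize :: "(nat \<times> nat) multiset \<Rightarrow> nat" where
  "psize P = (\<Sum>p \<in># P. fst p)"

definition psi10_partition :: "(nat \<times> nat) multiset \<Rightarrow> bool" where
  "psi10_partition P \<longleftrightarrow> ncopy_partition P \<and>
     (\<exists>xs. mset xs = P \<and> sorted_wrt lex_le xs \<and>
        (\<forall>k. Suc k < length xs \<longrightarrow> wdiff (xs ! Suc k) (xs ! k) = -1) \<and>
        (xs \<noteq> [] \<longrightarrow> fst (hd xs) = snd (hd xs)))"

definition psi10_count :: "nat \<Rightarrow> nat" where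
  "psi10_count N = card {P. psi10_partition P \<and> psize P = N}"

end

theory Submission
  imports Defs
begin

text \<open>A partition counted by \<open>\<psi>\<^sub>1\<^sub>0\<close> is a chain of parts \<open>(m\<^sub>1)\<^sub>i\<^sub>1 < \<dots> < (m\<^sub>k)\<^sub>i\<^sub>k\<close> with
  \<open>m\<^sub>1 = i\<^sub>1\<close> and \<open>m\<^sub>j\<^sub>+\<^sub>1 = m\<^sub>j + i\<^sub>j + i\<^sub>j\<^sub>+\<^sub>1 - 1\<close>, so it is determined by the freely chosen
  offsets \<open>a\<^sub>j = i\<^sub>j - 1 \<ge> 0\<close>. With all offsets zero the parts are \<open>1, 2, \<dots>, k\<close>; raising \<open>a\<^sub>j\<close>
  by one raises the \<open>j\<close>-th part by 1 and every later part by 2. Summing the resulting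
  geometric series over each offset, the partitions with \<open>k\<close> parts contribute
  \<open>q\<^bsup>k(k+1)/2\<^esup> / \<Prod>\<^sub>j\<^sub><\<^sub>k (1 - q\<^bsup>2j+1\<^esup>)\<close>, the \<open>k\<close>-th term of \<open>\<psi>\<^sub>1\<^sub>0\<close>. Absolute convergence allows
  regrouping the sum over all offset lists by the number of parts and by the size.\<close>

text \<open>\<open>chain_parts s as\<close> lists the parts following a (possibly virtual) part \<open>m\<^sub>i\<close> with
  \<open>m + i = s\<close> such that each has weighted difference \<open>-1\<close> to its predecessor; the entries of
  \<open>as\<close> are the copy indices minus one. Starting from the virtual part \<open>0\<^sub>1\<close> (\<open>s = 1\<close>) makes
  the first part of the form \<open>j\<^sub>j\<close>.\<close>

fun chain_parts :: "nat \<Rightarrow> nat list \<Rightarrow> (nat \<times> nat) list" where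
  "chain_parts s [] = []"
| "chain_parts s (a # as) = (s + a, Suc a) # chain_parts (s + 2 * a + 1) as"

lemma length_chain_parts [simp]: "length (chain_parts s as) = length as"
  by (induction as arbitrary: s) auto

lemma map_snd_chain_parts: "map snd (chain_parts s as) = map Suc as"
  by (induction as arbitrary: s) auto

lemma chain_parts_shift: "chain_parts (s + d) as = map (apfst ((+) d)) (chain_parts s as)"
proof (induction as arbitrary: s)
  case (Cons a as)
  then show ?case using Cons.IH[of "s + 2 * a + 1"] by (simp add: add_ac)
qed simp

lemma chain_parts_fst_ge: "p \<in> set (chain_parts s as) \<Longrightarrow> s \<le> fst p"
  by (induction as arbitrary: s) fastforce+

lemma sorted_chain_parts: "sorted_wrt (<) (map fst (chain_parts s as))"
proof (induction as arbitrary: s)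
  case (Cons a as)
  have "s + a < fst p" if "p \<in> set (chain_parts (s + 2 * a + 1) as)" for p
    using chain_parts_fst_ge[OF that] by linarith
  then show ?case using Cons.IH by auto
qed simp

lemma valid_chain_parts: "1 \<le> s \<Longrightarrow> p \<in> set (chain_parts s as) \<Longrightarrow> valid_part p"
  by (induction as arbitrary: s) (auto simp: valid_part_def)

lemma wdiff_chain_parts:
  "Suc k < length as \<Longrightarrow> wdiff (chain_parts s as ! Suc k) (chain_parts s as ! k) = -1"
proof (induction as arbitrary: s k)
  case (Cons a as)
  show ?case
  proof (cases k)
    case 0
    then show ?thesis using Cons.prems by (cases as) (auto simp: wdiff_def)
  next
    case (Suc k')
    then show ?thesis using Cons.prems Cons.IH[of k' "s + 2 * a + 1"] by simp
  qed
qed simp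

lemma chain_parts_unique:
  assumes "\<forall>p \<in> set xs. valid_part p"
    and "\<forall>k. Suc k < length xs \<longrightarrow> wdiff (xs ! Suc k) (xs ! k) = -1"
    and "xs \<noteq> [] \<longrightarrow> fst (hd xs) + 1 = s + snd (hd xs)"
  shows "xs = chain_parts s (map (\<lambda>p. snd p - 1) xs)"
  using assms
proof (induction xs arbitrary: s)
  case (Cons x xs)
  obtain m i where x: "x = (m, i)" by force
  then obtain a where i: "i = Suc a" "m = s + a"
    using Cons.prems(1,3) by (cases i) (auto simp: valid_part_def)
  have "wdiff (xs ! Suc k) (xs ! k) = -1" if "Suc k < length xs" for k
    using Cons.prems(2) that by (metis Suc_less_eq length_Cons nth_Cons_Suc)
  moreover have "fst (hd xs) + 1 = m + i + snd (hd xs)" if "xs \<noteq> []"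
    using Cons.prems(2)[rule_format, of 0] that x by (cases xs) (auto simp: wdiff_def)
  ultimately have "xs = chain_parts (m + i) (map (\<lambda>p. snd p - 1) xs)"
    using Cons.IH Cons.prems(1) by auto
  then show ?case using x i by (simp add: mult_2 add.assoc)
qed simp

lemma psi10_partition_iff: "psi10_partition P \<longleftrightarrow> (\<exists>as. P = mset (chain_parts 1 as))"
proof
  assume "psi10_partition P"
  then obtain xs where xs: "mset xs = P" "\<forall>p \<in> set xs. valid_part p"
      "\<forall>k. Suc k < length xs \<longrightarrow> wdiff (xs ! Suc k) (xs ! k) = -1"
      "xs \<noteq> [] \<longrightarrow> fst (hd xs) = snd (hd xs)"
    unfolding psi10_partition_def ncopy_partition_def by auto
  then have "xs = chain_parts 1 (map (\<lambda>p. snd p - 1) xs)"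
    by (intro chain_parts_unique) auto
  then show "\<exists>as. P = mset (chain_parts 1 as)" using xs(1) by metis
next
  assume "\<exists>as. P = mset (chain_parts 1 as)"
  then obtain as where P: "P = mset (chain_parts 1 as)" ..
  have "sorted_wrt lex_le (chain_parts 1 as)"
    using sorted_chain_parts[of 1 as]
    by (auto simp: sorted_wrt_map lex_le_def elim: sorted_wrt_mono_rel[rotated])
  moreover have "chain_parts 1 as \<noteq> [] \<longrightarrow> fst (hd (chain_parts 1 as)) = snd (hd (chain_parts 1 as))"
    by (cases as) auto
  ultimately show "psi10_partition P"
    unfolding psi10_partition_def ncopy_partition_def P
    using valid_chain_parts[of 1] wdiff_chain_parts[of _ as 1] by auto
qed

lemma inj_mset_chain_parts: "inj (\<lambda>as. mset (chain_parts s as))"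
proof (rule injI)
  fix as bs assume eq: "mset (chain_parts s as) = mset (chain_parts s bs)"
  have inj_fst: "inj_on fst (set (chain_parts s as))"
    using sorted_chain_parts[of s as] by (simp add: strict_sorted_iff distinct_map)
  have "chain_parts s as = sort_key fst (chain_parts s as)"
    using sorted_chain_parts[of s as] by (simp add: strict_sorted_iff sort_key_id_if_sorted)
  also have "\<dots> = chain_parts s bs"
    using sorted_chain_parts[of s bs] by (intro sort_key_inj_key_eq eq inj_fst) (simp add: strict_sorted_iff)
  finally show "as = bs"
    by (metis map_snd_chain_parts list.inj_map_strong nat.inject)
qed

definition weight :: "nat list \<Rightarrow> nat" where
  "weight as = sum_list (map fst (chain_parts 1 as))"

lemma weight_Nil [simp]: "weight [] = 0"
  by (simp add: weight_def)

lemma weight_Cons: "weight (a # as) = weight as + Suc (length as) + (2 * length as + 1) * a"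
proof -
  have chain: "chain_parts 1 (a # as) = (Suc a, Suc a) # map (apfst ((+) (2 * a + 1))) (chain_parts 1 as)"
    using chain_parts_shift[of 1 "2 * a + 1" as] by simp
  have shift: "sum_list (map fst (map (apfst ((+) d)) xs)) = length xs * d + sum_list (map fst xs)"
    for d and xs :: "(nat \<times> nat) list"
    by (induction xs) auto
  from chain shift have "weight (a # as) = Suc a + (length as * (2 * a + 1) + weight as)"
    by (simp only: weight_def list.map sum_list.Cons length_chain_parts fst_conv)
  then show ?thesis by (simp add: algebra_simps)
qed

lemma weight_bounds: "length as \<le> weight as \<and> (\<forall>a \<in> set as. a \<le> weight as)"
  by (induction as) (auto simp: weight_Cons)

lemma finite_weight_eq: "finite {as. weight as = N}"
proof (rule finite_subset)
  show "{as. weight as = N} \<subseteq> {as. set as \<subseteq> {..N} \<and> length as \<le> N}"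
    using weight_bounds by fastforce
  show "finite {as. set as \<subseteq> {..N} \<and> length as \<le> N}"
    by (rule finite_lists_length_le) simp
qed

lemma psi10_count_eq_card_weight: "psi10_count N = card {as. weight as = N}"
proof -
  have psize_mset: "psize (mset xs) = sum_list (map fst xs)" for xs
    by (simp add: psize_def sum_mset_sum_list flip: mset_map)
  have "{P. psi10_partition P \<and> psize P = N} = (\<lambda>as. mset (chain_parts 1 as)) ` {as. weight as = N}"
    by (auto simp: psi10_partition_iff psize_mset weight_def)
  then show ?thesis
    unfolding psi10_count_def
    by (simp add: card_image inj_on_subset[OF inj_mset_chain_parts])
qed

definition psi10_prod :: "'a::field \<Rightarrow> nat \<Rightarrow> 'a" where
  "psi10_prod x k = (\<Prod>j<k. x ^ Suc j / (1 - x ^ (2 * j + 1)))"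

lemma psi10_prod_0 [simp]: "psi10_prod x 0 = 1"
  by (simp add: psi10_prod_def)

lemma psi10_prod_Suc: "psi10_prod x (Suc k) = x ^ Suc k / (1 - x ^ (2 * k + 1)) * psi10_prod x k"
  by (simp add: psi10_prod_def mult.commute)

lemma psi10_term_eq_psi10_prod: "psi10_term q k = psi10_prod q k"
proof (induction k)
  case 0
  then show ?case by (simp add: psi10_term_def qpoch_def numeral_2_eq_2)
next
  case (Suc k)
  have binom: "(Suc k + 1) choose 2 = ((k + 1) choose 2) + Suc k"
    by (simp add: numeral_2_eq_2)
  have qpoch: "qpoch q (q ^ 2) (Suc k) = (1 - q ^ (2 * k + 1)) * qpoch q (q ^ 2) k"
    by (simp add: qpoch_def power_mult[symmetric] mult_ac)
  have "psi10_term q (Suc k) = q ^ Suc k / (1 - q ^ (2 * k + 1)) * psi10_term q k"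
    unfolding psi10_term_def qpoch binom by (simp add: power_add mult_ac)
  then show ?case using Suc by (simp add: psi10_prod_Suc)
qed

lemma summable_norm_psi10_prod:
  fixes x :: "'a::real_normed_field"
  assumes "norm x < 1"
  shows "summable (\<lambda>k. norm (psi10_prod x k))"
proof -
  define r where "r = norm x"
  have r: "0 \<le> r" "r < 1" using assms by (auto simp: r_def)
  have "(\<lambda>k. r ^ Suc k / (1 - r)) \<longlonglongrightarrow> 0 / (1 - r)"
    using r by (intro tendsto_divide LIMSEQ_power_zero[THEN LIMSEQ_Suc]) auto
  then have "\<forall>\<^sub>F k in sequentially. r ^ Suc k / (1 - r) < 1 / 2"
    by (rule order_tendstoD(2)) simp
  then obtain N where N: "\<And>k. k \<ge> N \<Longrightarrow> r ^ Suc k / (1 - r) < 1 / 2"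
    by (auto simp: eventually_sequentially)
  show ?thesis
  proof (rule summable_ratio_test[of "1 / 2" N])
    fix k assume "N \<le> k"
    have "r ^ (2 * k + 1) \<le> r" using r by (simp add: power_le_one mult_left_le)
    then have "1 - r \<le> norm (1 - x ^ (2 * k + 1))"
      using norm_triangle_ineq2[of 1 "x ^ (2 * k + 1)"] by (simp add: norm_power r_def norm_minus_commute del: power_Suc)
    then have "norm (x ^ Suc k / (1 - x ^ (2 * k + 1))) \<le> r ^ Suc k / (1 - r)"
      using r unfolding norm_divide norm_power r_def by (intro frac_le) auto
    then have "norm (x ^ Suc k / (1 - x ^ (2 * k + 1))) \<le> 1 / 2"
      using N[OF \<open>N \<le> k\<close>] by linarith
    then have "norm (x ^ Suc k / (1 - x ^ (2 * k + 1))) * norm (psi10_prod x k)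
        \<le> 1 / 2 * norm (psi10_prod x k)"
      by (rule mult_right_mono) simp
    then show "norm (norm (psi10_prod x (Suc k))) \<le> 1 / 2 * norm (norm (psi10_prod x k))"
      by (simp only: psi10_prod_Suc norm_mult real_norm_def abs_mult abs_norm_cancel)
  qed simp
qed

lemma has_sum_times:
  fixes f g :: "_ \<Rightarrow> 'a::{banach, real_normed_div_algebra}"
  assumes f: "(f has_sum a) A" "(\<lambda>x. norm (f x)) summable_on A"
    and g: "(g has_sum b) B" "(\<lambda>y. norm (g y)) summable_on B"
  shows "((\<lambda>(x, y). f x * g y) has_sum a * b) (A \<times> B)"
    and "(\<lambda>(x, y). norm (f x * g y)) summable_on (A \<times> B)"
proof -
  have norm_infsum: "infsum (\<lambda>y. norm (f x * g y)) B = norm (f x) * infsum (\<lambda>y. norm (g y)) B" for x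
    by (simp add: norm_mult infsum_cmult_right')
  have "(\<lambda>y. norm (f x * g y)) summable_on B" for x
    using summable_on_cmult_right[OF g(2), of "norm (f x)"] by (simp add: norm_mult)
  moreover have "(\<lambda>x. norm (infsum (\<lambda>y. norm (f x * g y)) B)) summable_on A"
    using summable_on_cmult_left[OF f(2), of "\<bar>infsum (\<lambda>y. norm (g y)) B\<bar>"]
    by (simp add: norm_infsum abs_mult)
  ultimately have "(\<lambda>p. norm (case p of (x, y) \<Rightarrow> f x * g y)) summable_on (A \<times> B)"
    by (subst Infinite_Sum.abs_summable_on_Sigma_iff) auto
  then show abs_summable: "(\<lambda>(x, y). norm (f x * g y)) summable_on (A \<times> B)"
    by (simp add: case_prod_unfold)
  show "((\<lambda>(x, y). f x * g y) has_sum a * b) (A \<times> B)"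
  proof (rule has_sum_SigmaI)
    show "((\<lambda>y. case (x, y) of (x, y) \<Rightarrow> f x * g y) has_sum f x * b) B" for x
      using has_sum_cmult_right[OF g(1)] by simp
    show "((\<lambda>x. f x * b) has_sum a * b) A"
      by (rule has_sum_cmult_left[OF f(1)])
    show "(\<lambda>(x, y). f x * g y) summable_on A \<times> B"
      using abs_summable by (simp add: case_prod_unfold abs_summable_summable)
  qed
qed

lemma has_sum_geometric:
  fixes z :: "'a::{banach, real_normed_field}"
  assumes "norm z < 1"
  shows "((\<lambda>n. z ^ n) has_sum 1 / (1 - z)) UNIV" and "(\<lambda>n. norm (z ^ n)) summable_on UNIV"
proof -
  have "summable (\<lambda>n. norm (z ^ n))"
    using assms by (simp add: norm_power summable_geometric)
  then show "((\<lambda>n. z ^ n) has_sum 1 / (1 - z)) UNIV" "(\<lambda>n. norm (z ^ n)) summable_on UNIV"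
    using assms by (auto intro: norm_summable_imp_has_sum norm_summable_imp_summable_on geometric_sums)
qed

lemma has_sum_lists_length_Suc_iff:
  "(f has_sum S) {xs. length xs = Suc k} \<longleftrightarrow>
   ((\<lambda>(a, xs). f (a # xs)) has_sum S) (UNIV \<times> {xs. length xs = k})"
proof -
  have img: "{xs. length xs = Suc k} = (\<lambda>(a, xs). a # xs) ` (UNIV \<times> {xs. length xs = k})"
    by (auto simp: length_Suc_conv image_iff)
  have inj: "inj_on (\<lambda>(a, xs). a # xs) (UNIV \<times> {xs. length xs = k})"
    by (auto simp: inj_on_def)
  show ?thesis
    unfolding img has_sum_reindex[OF inj] by (simp add: comp_def case_prod_unfold)
qed

lemma summable_on_lists_length_Suc_iff:
  "f summable_on {xs. length xs = Suc k} \<longleftrightarrow>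
   (\<lambda>(a, xs). f (a # xs)) summable_on (UNIV \<times> {xs. length xs = k})"
  by (simp add: summable_on_def has_sum_lists_length_Suc_iff)

lemma has_sum_power_weight:
  fixes x :: "'a::{banach, real_normed_field}"
  assumes "norm x < 1"
  shows "((\<lambda>as. x ^ weight as) has_sum psi10_prod x k) {as. length as = k}
    \<and> (\<lambda>as. norm (x ^ weight as)) summable_on {as. length as = k}"
proof (induction k)
  case 0
  have "{as. length as = 0} = {[]}" by auto
  then show ?case by (auto intro: has_sum_finiteI)
next
  case (Suc k)
  define z where "z = x ^ (2 * k + 1)"
  have "norm z < 1"
    using assms unfolding z_def norm_power by (simp add: power_less_one_iff del: power_Suc)
  note prod = has_sum_times[OF has_sum_geometric[OF this] conjunct1[OF Suc] conjunct2[OF Suc]]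
  have weight: "x ^ weight (a # as) = x ^ Suc k * (z ^ a * x ^ weight as)" if "length as = k" for a as
  proof -
    have "weight (a # as) = Suc k + ((2 * k + 1) * a + weight as)"
      using that by (simp add: weight_Cons)
    then show ?thesis by (simp only: power_add power_mult z_def)
  qed
  have "((\<lambda>(a, as). x ^ weight (a # as)) has_sum x ^ Suc k * (1 / (1 - z) * psi10_prod x k))
      (UNIV \<times> {as. length as = k})"
    using has_sum_cmult_right[OF prod(1), of "x ^ Suc k"]
    by (rule has_sum_cong[THEN iffD1, rotated]) (auto simp: weight)
  moreover have "(\<lambda>(a, as). norm (x ^ weight (a # as))) summable_on (UNIV \<times> {as. length as = k})"
    using summable_on_cmult_right[OF prod(2), of "norm (x ^ Suc k)"]
    by (rule summable_on_cong[THEN iffD1, rotated]) (auto simp: weight norm_mult)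
  ultimately show ?case
    by (simp add: has_sum_lists_length_Suc_iff summable_on_lists_length_Suc_iff psi10_prod_Suc z_def)
qed

lemma has_sum_group_by:
  fixes f :: "'a \<Rightarrow> 'b::banach"
  assumes "(f has_sum S) A"
    and "\<And>n. (f has_sum g n) {x \<in> A. h x = n}"
  shows "(g has_sum S) UNIV"
proof (rule has_sum_SigmaD)
  have "inj_on (\<lambda>x. (h x, x)) A" by (auto simp: inj_on_def)
  moreover have "(\<lambda>x. (h x, x)) ` A = Sigma UNIV (\<lambda>n. {x \<in> A. h x = n})" by auto
  ultimately show "((\<lambda>p. f (snd p)) has_sum S) (Sigma UNIV (\<lambda>n. {x \<in> A. h x = n}))"
    using assms(1) has_sum_reindex[of "\<lambda>x. (h x, x)" A "\<lambda>p. f (snd p)" S] by (simp add: comp_def)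
qed (use assms(2) in simp)

lemma summable_norm_power_weight:
  fixes x :: "'a::{banach, real_normed_field}"
  assumes "norm x < 1"
  shows "(\<lambda>as. norm (x ^ weight as)) summable_on UNIV"
proof -
  define L where "L k = {as :: nat list. length as = k}" for k
  have "((\<lambda>as. norm x ^ weight as) has_sum psi10_prod (norm x) k) (L k)" for k
    using has_sum_power_weight[of "norm x" k] assms by (simp add: L_def)
  then have "infsum (\<lambda>as. norm (x ^ weight as)) (L k) = psi10_prod (norm x) k" for k
    by (simp add: norm_power infsumI)
  moreover have "(\<lambda>k. norm (psi10_prod (norm x) k)) summable_on UNIV"
    using summable_norm_psi10_prod[of "norm x"] assms
    by (intro norm_summable_imp_summable_on) simp
  ultimately have "(\<lambda>p. norm (x ^ weight (snd p))) summable_on Sigma UNIV L"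
    using has_sum_power_weight[OF assms]
    by (subst Infinite_Sum.abs_summable_on_Sigma_iff) (auto simp: L_def)
  moreover have "inj (\<lambda>as. (length as, as))" by (auto simp: inj_on_def)
  moreover have "range (\<lambda>as. (length as, as)) = Sigma UNIV L" by (auto simp: L_def)
  ultimately show ?thesis
    using summable_on_reindex[of "\<lambda>as. (length as, as)" UNIV "\<lambda>p. norm (x ^ weight (snd p))"]
    by (simp add: comp_def)
qed

theorem theorem26:
  fixes q :: complex
  assumes "norm q < 1"
  shows "summable (psi10_term q) \<and> (\<lambda>N. of_nat (psi10_count N) * q ^ N) sums psi10 q"
proof -
  obtain S where S: "((\<lambda>as. q ^ weight as) has_sum S) UNIV"
    using abs_summable_summable[OF summable_norm_power_weight[OF assms]] by (auto simp: summable_on_def)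
  have "(psi10_prod q has_sum S) UNIV"
    using S by (rule has_sum_group_by[where h = length]) (use has_sum_power_weight[OF assms] in simp)
  then have psi10: "psi10_term q sums S"
    by (simp add: psi10_term_eq_psi10_prod[abs_def] has_sum_imp_sums)
  have "((\<lambda>N. of_nat (card {as. weight as = N}) * q ^ N) has_sum S) UNIV"
    using S by (rule has_sum_group_by[where h = weight]) (simp add: has_sum_finiteI finite_weight_eq)
  then have "(\<lambda>N. of_nat (psi10_count N) * q ^ N) sums S"
    by (simp add: psi10_count_eq_card_weight has_sum_imp_sums)
  with psi10 show ?thesis
    by (auto simp: psi10_def sums_iff)
qed

end
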